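(* Let $n\ge 3$, $p>1$, $p'=p/(p-1)$. Assume $\partial\Omega$ is smooth and $\Omega$ satisfies the exterior ball condition. Let $\phi_0\in C^2(\Omega^c)$ satisfy $\partial_i(a_{ij}\partial_j\phi_0)=0$ in $\Omega^c$, $\phi_0|_{\partial\Omega}=0$, $\phi_0(x)\to1$ as $|x|\to\infty$, and $0<\phi_0<1$ on $\Omega^c$. Let $\phi_1\in C^2(\Omega^c)$ satisfy $\partial_i(a_{ij}\partial_j\phi_1)=\phi_1$ in $\Omega^c$, $\phi_1|_{\partial\Omega}=0$, $\phi_1(x)-\int_{S^{n-1}}e^{x\cdot\omega}d\omega\to0$ as $|x|\to\infty$, and $0<\phi_1(x)\le C_1(1+|x|)^{-(n-1)/2}e^{|x|}$ on $\Omega^c$ for some $C_1>0$. Let $\psi_1(x,t)=\phi_1(x)e^{-t}$. Then there is a constant $C>0$ such that for all $t\ge0$, $$\int_{\Omega^c\cap\{|x|\le t+R\}}[\phi_0(x)]^{-1/(p-1)}[\psi_1(x,t)]^{p/(p-1)}\,dx\le C(t+R)^{n-1-(n-1)p'/2}.$$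
   Context: $\Omega\subset\mathbb{R}^n$ is a smooth compact obstacle (compact set with smooth boundary) and $\Omega^c=\mathbb{R}^n\setminus\Omega$. $R>0$ is fixed with $0\in\Omega$ and $\Omega$ compactly contained in the open ball $B_R$ of radius $R$ centered at the origin. $A(x)=(a_{ij}(x))_{i,j=1}^n$ is a smooth function on $\Omega^c$ with values in real symmetric $n\times n$ matrices, uniformly elliptic ($C^{-1}|\xi|^2\le a_{ij}(x)\xi_i\xi_j\le C|\xi|^2$), and $a_{ij}(x)=\delta_{ij}$ for $|x|\ge R$. Repeated indices are summed. The exterior ball condition on $\Omega$ means: for every $y\in\partial\Omega$ there is an open ball $B\subset\Omega^c$ with $y\in\partial B$. *)

theory Defs
  imports "HOL-Analysis.Analysis"
begin

definition pd :: "'n::finite \<Rightarrow> (real^'n \<Rightarrow> real) \<Rightarrow> real^'n \<Rightarrow> real" where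
  "pd i f x = deriv (\<lambda>t. f (x + t *\<^sub>R axis i 1)) 0"

fun Ck_on :: "nat \<Rightarrow> (real^'n::finite) set \<Rightarrow> (real^'n \<Rightarrow> real) \<Rightarrow> bool" where
  "Ck_on 0 U f = continuous_on U f"
| "Ck_on (Suc k) U f = (continuous_on U f \<and> (\<forall>x\<in>U. f differentiable (at x))
      \<and> (\<forall>i. Ck_on k U (pd i f)))"

definition smooth_on :: "(real^'n::finite) set \<Rightarrow> (real^'n \<Rightarrow> real) \<Rightarrow> bool" where
  "smooth_on U f = (\<forall>k. Ck_on k U f)"

definition smooth_boundary :: "(real^'n::finite) set \<Rightarrow> bool" where
  "smooth_boundary \<Omega> = (\<forall>y\<in>frontier \<Omega>. \<exists>U g. open U \<and> y \<in> U \<and> smooth_on U g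
      \<and> (\<forall>x\<in>U. \<exists>i. pd i g x \<noteq> 0) \<and> \<Omega> \<inter> U = {x\<in>U. g x \<le> 0})"

definition exterior_ball_condition :: "(real^'n::finite) set \<Rightarrow> bool" where
  "exterior_ball_condition \<Omega> = (\<forall>y\<in>frontier \<Omega>. \<exists>c r. r > 0 \<and> ball c r \<subseteq> - \<Omega> \<and> y \<in> sphere c r)"

definition div_op :: "(real^'n::finite \<Rightarrow> real^'n^'n) \<Rightarrow> (real^'n \<Rightarrow> real) \<Rightarrow> real^'n \<Rightarrow> real" where
  "div_op A u x = (\<Sum>i\<in>UNIV. pd i (\<lambda>y. \<Sum>j\<in>UNIV. A y $ i $ j * pd j u y) x)"

text \<open>Integral over the unit sphere S^(n-1) w.r.t. surface measure, defined via the cone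
  construction (Folland): \<integral>_S g d\<sigma> = n \<cdot> \<integral>_{B(0,1)} g(y/|y|) dy.\<close>
definition sphere_integral :: "(real^'n::finite \<Rightarrow> real) \<Rightarrow> real" where
  "sphere_integral g = real CARD('n) * integral (ball 0 1) (\<lambda>y. g (y /\<^sub>R norm y))"

end

(*
  Near the obstacle a maximum principle compares \<phi>1 with \<phi>0: at an interior minimum of
  w = K \<phi>0 - \<phi>1 the gradient of w vanishes and its Hessian is positive semidefinite, so
  \<partial>_i(a_ij \<partial>_j w) = tr(A \<nabla>\<^sup>2w) \<ge> 0 there, whereas the equations give \<partial>_i(a_ij \<partial>_j w) = -\<phi>1 < 0.
  Choosing K so that w \<ge> 0 on |x| = R (w vanishes on \<partial>\<Omega>) yields \<phi>1 \<le> K \<phi>0 for |x| \<le> R, and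
  there the integrand \<phi>0^(-1/(p-1)) \<psi>1^p' = (\<psi>1/\<phi>0)^(1/(p-1)) \<psi>1 is O(e^(-p't)).
  For |x| \<ge> R, \<phi>0 is bounded below (it tends to 1), so the integrand is
  O((1+|x|)^(-(n-1)p'/2) e^(p'(|x|-t))). Summing over the unit shells t+R-k-1 < |x| \<le> t+R-k,
  of volume O((t+R-k)^(n-1)), gives (t+R)^(n-1-(n-1)p'/2) times a convergent series
  \<Sum>_k e^(-p'k) (1+k)^c.
*)

theory Submission
  imports Defs "HOL-Real_Asymp.Real_Asymp"
begin

section \<open>Quadratic forms\<close>

definition quad_form :: "('n::finite \<Rightarrow> 'n \<Rightarrow> real) \<Rightarrow> ('n \<Rightarrow> real) \<Rightarrow> real" where
  "quad_form a \<xi> = (\<Sum>i\<in>UNIV. \<Sum>j\<in>UNIV. a i j * \<xi> i * \<xi> j)"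

lemma quad_form_add_axis:
  assumes sym: "\<And>i j. a i j = a j i"
  shows "quad_form a (\<lambda>i. \<xi> i + (if i = k then s else 0))
       = quad_form a \<xi> + 2 * s * (\<Sum>j\<in>UNIV. a k j * \<xi> j) + s\<^sup>2 * a k k"
proof -
  have if_out: "(\<Sum>j\<in>UNIV. if P then f j else 0) = (if P then sum f UNIV else (0::real))" for P f
    by simp
  have "quad_form a (\<lambda>i. \<xi> i + (if i = k then s else 0)) =
     (\<Sum>i\<in>UNIV. \<Sum>j\<in>UNIV. a i j * \<xi> i * \<xi> j + (if j = k then s * a i j * \<xi> i else 0)
        + (if i = k then s * a i j * \<xi> j else 0) + (if i = k then (if j = k then s\<^sup>2 * a i j else 0) else 0))"
    unfolding quad_form_def by (intro sum.cong refl) (auto simp: algebra_simps power2_eq_square)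
  also have "\<dots> = quad_form a \<xi> + s * (\<Sum>i\<in>UNIV. a i k * \<xi> i) + s * (\<Sum>j\<in>UNIV. a k j * \<xi> j) + s\<^sup>2 * a k k"
    unfolding quad_form_def by (simp add: sum.distrib sum_distrib_left mult.assoc if_out)
  also have "(\<Sum>i\<in>UNIV. a i k * \<xi> i) = (\<Sum>j\<in>UNIV. a k j * \<xi> j)"
    using sym by metis
  finally show ?thesis by simp
qed

lemma psd_diag_zero_imp_row_zero:
  assumes sym: "\<And>i j. a i j = a j i" and psd: "\<And>\<xi>. 0 \<le> quad_form a \<xi>" and akk: "a k k = 0"
  shows "a k j = 0"
proof -
  have linear_nonneg: "0 \<le> quad_form a \<xi> + 2 * s * (\<Sum>l\<in>UNIV. a k l * \<xi> l)" for \<xi> s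
    using psd[of "\<lambda>i. \<xi> i + (if i = k then s else 0)"] by (simp add: quad_form_add_axis[OF sym] akk)
  \<comment> \<open>a nonnegative affine function of s has zero slope\<close>
  have "(\<Sum>l\<in>UNIV. a k l * \<xi> l) = 0" for \<xi>
  proof (rule ccontr)
    define b where "b = (\<Sum>l\<in>UNIV. a k l * \<xi> l)"
    assume "(\<Sum>l\<in>UNIV. a k l * \<xi> l) \<noteq> 0"
    hence "b \<noteq> 0" by (simp add: b_def)
    have "0 \<le> quad_form a \<xi> + 2 * (- (quad_form a \<xi> + 1) / (2 * b)) * b"
      using linear_nonneg[of \<xi> "- (quad_form a \<xi> + 1) / (2 * b)"] by (simp add: b_def)
    also have "\<dots> = -1" using \<open>b \<noteq> 0\<close> by (simp add: field_simps)
    finally show False by simp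
  qed
  from this[of "\<lambda>i. if i = j then 1 else 0"] show ?thesis
    by (simp add: if_distrib sum.If_cases)
qed

lemma schur_complement_psd:
  assumes sym: "\<And>i j. a i j = a j i" and psd: "\<And>\<xi>. 0 \<le> quad_form a \<xi>" and akk: "a k k > 0"
  shows "0 \<le> quad_form (\<lambda>i j. a i j - a i k * a k j / a k k) \<xi>"
proof -
  define b where "b = (\<Sum>j\<in>UNIV. a k j * \<xi> j)"
  have "quad_form (\<lambda>i j. a i j - a i k * a k j / a k k) \<xi>
      = quad_form a \<xi> - (\<Sum>i\<in>UNIV. \<Sum>j\<in>UNIV. (a i k * \<xi> i) * (a k j * \<xi> j)) / a k k"
    unfolding quad_form_def by (simp add: algebra_simps sum_subtractf sum_divide_distrib)
  also have "(\<Sum>i\<in>UNIV. \<Sum>j\<in>UNIV. (a i k * \<xi> i) * (a k j * \<xi> j)) = b\<^sup>2"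
    using sym by (simp add: b_def sum_product power2_eq_square)
  also have "quad_form a \<xi> - b\<^sup>2 / a k k
      = quad_form a \<xi> + 2 * (- b / a k k) * b + (- b / a k k)\<^sup>2 * a k k"
    using akk by (simp add: field_simps power2_eq_square)
  also have "\<dots> \<ge> 0"
    using psd[of "\<lambda>i. \<xi> i + (if i = k then - b / a k k else 0)"]
    by (simp add: quad_form_add_axis[OF sym] b_def)
  finally show ?thesis .
qed

lemma trace_mult_nonneg_supported:
  fixes h :: "'n::finite \<Rightarrow> 'n \<Rightarrow> real"
  assumes "finite I" and psd_h: "\<And>\<xi>. 0 \<le> quad_form h \<xi>"
    and "\<And>i j. a i j = a j i" "\<And>\<xi>. 0 \<le> quad_form a \<xi>"
    and "\<And>i j. i \<notin> I \<or> j \<notin> I \<Longrightarrow> a i j = 0"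
  shows "0 \<le> (\<Sum>i\<in>UNIV. \<Sum>j\<in>UNIV. a i j * h i j)"
  using assms(1,3-5)
proof (induction I arbitrary: a rule: finite_induct)
  case empty
  then show ?case by simp
next
  case (insert k I)
  have akk: "a k k \<ge> 0"
    using insert.prems(2)[of "\<lambda>i. 0 + (if i = k then 1 else 0)"]
    by (simp only: quad_form_add_axis[OF insert.prems(1)]) (simp add: quad_form_def)
  show ?case
  proof (cases "a k k = 0")
    case True
    have "a k j = 0" "a j k = 0" for j
      using psd_diag_zero_imp_row_zero[OF insert.prems(1,2) True] insert.prems(1) by metis+
    then show ?thesis
      using insert.IH[of a] insert.prems by (metis insert_iff)
  next
    case False
    with akk have akk: "a k k > 0" by simp
    \<comment> \<open>Eliminating row and column k by a Schur complement splits off the nonnegative term h(a_k, a_k)/a_kk.\<close>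
    define a' where "a' i j = a i j - a i k * a k j / a k k" for i j
    have "0 \<le> (\<Sum>i\<in>UNIV. \<Sum>j\<in>UNIV. a' i j * h i j)"
    proof (rule insert.IH)
      show "a' i j = a' j i" for i j using insert.prems(1) unfolding a'_def by (metis mult.commute)
      show "0 \<le> quad_form a' \<xi>" for \<xi>
        unfolding a'_def using schur_complement_psd[OF insert.prems(1,2) akk] .
      show "a' i j = 0" if "i \<notin> I \<or> j \<notin> I" for i j
        using that insert.prems(1,3) akk unfolding a'_def by (cases "i = k"; cases "j = k") auto
    qed
    moreover have "(\<Sum>i\<in>UNIV. \<Sum>j\<in>UNIV. a i j * h i j)
        = (\<Sum>i\<in>UNIV. \<Sum>j\<in>UNIV. a' i j * h i j) + quad_form h (\<lambda>i. a i k) / a k k"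
      unfolding a'_def quad_form_def using insert.prems(1)
      by (simp add: algebra_simps sum_subtractf sum_divide_distrib sum.distrib)
    ultimately show ?thesis using psd_h[of "\<lambda>i. a i k"] akk by simp
  qed
qed

(* Only a needs to be symmetric: h will be a Hessian whose symmetry is never established. *)
lemma trace_mult_nonneg:
  fixes a h :: "'n::finite \<Rightarrow> 'n \<Rightarrow> real"
  assumes "\<And>i j. a i j = a j i" "\<And>\<xi>. 0 \<le> quad_form a \<xi>" "\<And>\<xi>. 0 \<le> quad_form h \<xi>"
  shows "0 \<le> (\<Sum>i\<in>UNIV. \<Sum>j\<in>UNIV. a i j * h i j)"
  using trace_mult_nonneg_supported[of UNIV h a] assms by simp

section \<open>Partial derivatives and interior minima\<close>

lemma smooth_on_imp_differentiable:
  assumes "smooth_on U f" "x \<in> U"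
  shows "f differentiable (at x)"
proof -
  have "Ck_on (Suc 0) U f" using assms(1) unfolding smooth_on_def by blast
  with assms(2) show ?thesis by simp
qed

lemma pd_eq_derivative:
  assumes "(f has_derivative f') (at x)"
  shows "pd i f x = f' (axis i 1)"
proof -
  have "((\<lambda>t. x + t *\<^sub>R axis i 1) has_derivative (\<lambda>t. t *\<^sub>R axis i 1)) (at 0)"
    by (auto intro!: derivative_eq_intros)
  from has_derivative_compose[OF this, of f f'] assms
  have "((\<lambda>t. f (x + t *\<^sub>R axis i 1)) has_derivative (\<lambda>t. f' (t *\<^sub>R axis i 1))) (at 0)"
    by simp
  moreover have "(\<lambda>t. f' (t *\<^sub>R axis i 1)) = (*) (f' (axis i 1))"
    by (simp add: fun_eq_iff linear_scale[OF has_derivative_linear[OF assms]] mult.commute)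
  ultimately have "((\<lambda>t. f (x + t *\<^sub>R axis i 1)) has_field_derivative f' (axis i 1)) (at 0)"
    by (simp add: has_field_derivative_def mult.commute)
  thus ?thesis unfolding pd_def by (rule DERIV_imp_deriv)
qed

lemma has_derivative_pd:
  fixes f :: "real^'n \<Rightarrow> real"
  assumes "f differentiable (at x)"
  shows "(f has_derivative (\<lambda>v. \<Sum>j\<in>UNIV. v $ j * pd j f x)) (at x)"
proof -
  obtain f' where f': "(f has_derivative f') (at x)"
    using assms unfolding differentiable_def by blast
  have "f' v = (\<Sum>j\<in>UNIV. v $ j * pd j f x)" for v
  proof -
    have "f' v = f' (\<Sum>j\<in>UNIV. v $ j *\<^sub>R axis j 1)"
      using basis_expansion[of v] by (simp add: scalar_mult_eq_scaleR)
    also have "\<dots> = (\<Sum>j\<in>UNIV. v $ j * f' (axis j 1))"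
      using has_derivative_linear[OF f'] by (simp add: linear_sum linear_scale)
    finally show ?thesis by (simp add: pd_eq_derivative[OF f'])
  qed
  then have "f' = (\<lambda>v. \<Sum>j\<in>UNIV. v $ j * pd j f x)" by blast
  with f' show ?thesis by simp
qed

lemma sum_axis_mult: "(\<Sum>k\<in>UNIV. axis i (1::real) $ k * c k) = c i"
proof -
  have "axis i (1::real) $ k * c k = (if k = i then c k else 0)" for k
    by (simp add: axis_def)
  then show ?thesis by simp
qed

lemma div_op_product_rule:
  fixes A :: "real^'n \<Rightarrow> real^'n^'n"
  assumes dA: "\<And>i j. (\<lambda>y. A y $ i $ j) differentiable (at x)"
    and du: "\<And>j. pd j u differentiable (at x)"
  shows "div_op A u x = (\<Sum>i\<in>UNIV. \<Sum>j\<in>UNIV.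
            pd i (\<lambda>y. A y $ i $ j) x * pd j u x + A x $ i $ j * pd i (pd j u) x)"
proof -
  have "pd i (\<lambda>y. \<Sum>j\<in>UNIV. A y $ i $ j * pd j u y) x =
        (\<Sum>j\<in>UNIV. pd i (\<lambda>y. A y $ i $ j) x * pd j u x + A x $ i $ j * pd i (pd j u) x)" for i
  proof -
    have "((\<lambda>y. \<Sum>j\<in>UNIV. A y $ i $ j * pd j u y) has_derivative
      (\<lambda>v. \<Sum>j\<in>UNIV. A x $ i $ j * (\<Sum>k\<in>UNIV. v $ k * pd k (pd j u) x)
                      + (\<Sum>k\<in>UNIV. v $ k * pd k (\<lambda>y. A y $ i $ j) x) * pd j u x)) (at x)"
      by (intro has_derivative_sum has_derivative_mult has_derivative_pd dA du)
    from pd_eq_derivative[OF this, of i] show ?thesis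
      by (simp only: sum_axis_mult) (simp add: add.commute)
  qed
  then show ?thesis unfolding div_op_def by simp
qed

lemma has_real_derivative_along_line:
  fixes F :: "real^'n \<Rightarrow> real"
  assumes "(F has_derivative (\<lambda>v. \<Sum>j\<in>UNIV. v $ j * G j)) (at (x + s *\<^sub>R \<xi>))"
  shows "((\<lambda>s. F (x + s *\<^sub>R \<xi>)) has_real_derivative (\<Sum>j\<in>UNIV. \<xi> $ j * G j)) (at s)"
proof -
  have "((\<lambda>s. x + s *\<^sub>R \<xi>) has_derivative (\<lambda>t. t *\<^sub>R \<xi>)) (at s)"
    by (auto intro!: derivative_eq_intros)
  from has_derivative_compose[OF this assms]
  have "((\<lambda>s. F (x + s *\<^sub>R \<xi>)) has_derivative (\<lambda>t. \<Sum>j\<in>UNIV. (t *\<^sub>R \<xi>) $ j * G j)) (at s)"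
    by simp
  moreover have "(\<lambda>t. \<Sum>j\<in>UNIV. (t *\<^sub>R \<xi>) $ j * G j) = (*) (\<Sum>j\<in>UNIV. \<xi> $ j * G j)"
    by (simp add: fun_eq_iff sum_distrib_left mult_ac)
  ultimately show ?thesis by (simp add: has_field_derivative_def)
qed

lemma second_derivative_nonneg_at_local_min:
  fixes h h' :: "real \<Rightarrow> real"
  assumes "\<delta> > 0" and min: "\<And>s. \<bar>s\<bar> < \<delta> \<Longrightarrow> h 0 \<le> h s"
    and h: "\<And>s. \<bar>s\<bar> < \<delta> \<Longrightarrow> (h has_real_derivative h' s) (at s)"
    and h': "(h' has_real_derivative d) (at 0)" and "h' 0 = 0"
  shows "d \<ge> 0"
proof (rule ccontr)
  assume "\<not> d \<ge> 0"
  then obtain e where e: "e > 0" "\<And>s. 0 < s \<Longrightarrow> s < e \<Longrightarrow> h' s < h' 0"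
    using DERIV_neg_dec_right[OF h'] by force
  define s where "s = min e \<delta> / 2"
  have s: "0 < s" "s < e" "s < \<delta>" using e assms(1) by (auto simp: s_def)
  obtain z where z: "0 < z" "z < s" "h s - h 0 = s * h' z"
    using MVT2[of 0 s h h'] s h by auto
  have "h' z < 0" using e(2)[of z] z s \<open>h' 0 = 0\<close> by simp
  with z s have "h s < h 0" using mult_pos_neg[of s "h' z"] by simp
  with min[of s] s show False by simp
qed

lemma local_min_gradient_zero:
  fixes w :: "real^'n \<Rightarrow> real"
  assumes "\<delta> > 0" and min: "\<And>y. y \<in> ball x0 \<delta> \<Longrightarrow> w x0 \<le> w y"
    and dw: "(w has_derivative (\<lambda>v. \<Sum>j\<in>UNIV. v $ j * g j)) (at x0)"
  shows "g j = 0"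
proof -
  have "((\<lambda>s. w (x0 + s *\<^sub>R axis j 1)) has_real_derivative g j) (at 0)"
    using has_real_derivative_along_line[of w g x0 0 "axis j 1"] dw by (simp add: sum_axis_mult)
  moreover have "w (x0 + 0 *\<^sub>R axis j 1) \<le> w (x0 + s *\<^sub>R axis j 1)" if "\<bar>0 - s\<bar> < \<delta>" for s
    using min that by (simp add: dist_norm)
  ultimately show ?thesis
    using DERIV_local_min[OF _ \<open>\<delta> > 0\<close>] by blast
qed

lemma local_min_hessian_psd:
  fixes w :: "real^'n \<Rightarrow> real" and g :: "'n \<Rightarrow> real^'n \<Rightarrow> real"
  assumes "\<delta> > 0" and min: "\<And>y. y \<in> ball x0 \<delta> \<Longrightarrow> w x0 \<le> w y"
    and dw: "\<And>y. y \<in> ball x0 \<delta> \<Longrightarrow> (w has_derivative (\<lambda>v. \<Sum>j\<in>UNIV. v $ j * g j y)) (at y)"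
    and dg: "\<And>j. (g j has_derivative (\<lambda>v. \<Sum>i\<in>UNIV. v $ i * H i j)) (at x0)"
  shows "0 \<le> quad_form H \<xi>"
proof -
  define v :: "real^'n" where "v = (\<chi> i. \<xi> i)"
  define \<epsilon> where "\<epsilon> = \<delta> / (norm v + 1)"
  have "\<epsilon> > 0" using \<open>\<delta> > 0\<close> by (simp add: \<epsilon>_def add_nonneg_pos)
  have line_in_ball: "x0 + s *\<^sub>R v \<in> ball x0 \<delta>" if "\<bar>s\<bar> < \<epsilon>" for s
  proof -
    have "\<bar>s\<bar> * norm v \<le> \<bar>s\<bar> * (norm v + 1)" by (simp add: mult_left_mono)
    also have "\<dots> < \<delta>"
      using that \<open>\<delta> > 0\<close> by (simp add: \<epsilon>_def field_simps add_pos_nonneg)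
    finally show ?thesis by (simp add: dist_norm)
  qed
  define h' where "h' s = (\<Sum>j\<in>UNIV. v $ j * g j (x0 + s *\<^sub>R v))" for s
  have "((\<lambda>s. g j (x0 + s *\<^sub>R v)) has_real_derivative (\<Sum>i\<in>UNIV. v $ i * H i j)) (at 0)" for j
    using has_real_derivative_along_line[of "g j" "\<lambda>i. H i j" x0 0 v] dg by simp
  hence "(h' has_real_derivative (\<Sum>j\<in>UNIV. v $ j * (\<Sum>i\<in>UNIV. v $ i * H i j))) (at 0)"
    unfolding h'_def by (intro DERIV_sum DERIV_cmult)
  moreover have "h' 0 = 0"
  proof -
    have "(w has_derivative (\<lambda>v. \<Sum>j\<in>UNIV. v $ j * g j x0)) (at x0)"
      using dw \<open>\<delta> > 0\<close> by simp
    from local_min_gradient_zero[OF \<open>\<delta> > 0\<close> min this] have "g j x0 = 0" for j .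
    then show ?thesis by (simp add: h'_def)
  qed
  moreover have "w (x0 + 0 *\<^sub>R v) \<le> w (x0 + s *\<^sub>R v)" if "\<bar>s\<bar> < \<epsilon>" for s
    using min[OF line_in_ball[OF that]] by simp
  moreover have "((\<lambda>s. w (x0 + s *\<^sub>R v)) has_real_derivative h' s) (at s)" if "\<bar>s\<bar> < \<epsilon>" for s
    unfolding h'_def by (rule has_real_derivative_along_line[OF dw[OF line_in_ball[OF that]]])
  ultimately have "0 \<le> (\<Sum>j\<in>UNIV. v $ j * (\<Sum>i\<in>UNIV. v $ i * H i j))"
    by (intro second_derivative_nonneg_at_local_min[OF \<open>\<epsilon> > 0\<close>, of "\<lambda>s. w (x0 + s *\<^sub>R v)" h'])
  also have "\<dots> = quad_form H \<xi>"
    unfolding quad_form_def v_def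
    by (simp add: sum_distrib_left algebra_simps) (subst sum.swap, simp add: mult.left_commute)
  finally show ?thesis .
qed

section \<open>A comparison principle\<close>

lemma uniformly_elliptic_imp_psd:
  fixes A :: "real^'n \<Rightarrow> real^'n^'n"
  assumes "\<exists>C>0. \<forall>x\<in>X. \<forall>\<xi>::real^'n.
              1 / C * (norm \<xi>)\<^sup>2 \<le> (\<Sum>i\<in>UNIV. \<Sum>j\<in>UNIV. A x $ i $ j * \<xi> $ i * \<xi> $ j)
            \<and> (\<Sum>i\<in>UNIV. \<Sum>j\<in>UNIV. A x $ i $ j * \<xi> $ i * \<xi> $ j) \<le> C * (norm \<xi>)\<^sup>2"
    and "x \<in> X"
  shows "0 \<le> (\<Sum>i\<in>UNIV. \<Sum>j\<in>UNIV. A x $ i $ j * \<xi> $ i * \<xi> $ j)"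
proof -
  obtain C where "C > 0" and C: "\<forall>x\<in>X. \<forall>\<xi>::real^'n.
      1 / C * (norm \<xi>)\<^sup>2 \<le> (\<Sum>i\<in>UNIV. \<Sum>j\<in>UNIV. A x $ i $ j * \<xi> $ i * \<xi> $ j)
    \<and> (\<Sum>i\<in>UNIV. \<Sum>j\<in>UNIV. A x $ i $ j * \<xi> $ i * \<xi> $ j) \<le> C * (norm \<xi>)\<^sup>2"
    using assms(1) by blast
  have "0 \<le> 1 / C * (norm \<xi>)\<^sup>2" using \<open>C > 0\<close> by simp
  also have "\<dots> \<le> (\<Sum>i\<in>UNIV. \<Sum>j\<in>UNIV. A x $ i $ j * \<xi> $ i * \<xi> $ j)"
    using conjunct1[OF C[rule_format, OF assms(2), of \<xi>]] .
  finally show ?thesis .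
qed

lemma div_op_diff_nonneg_at_local_min:
  fixes A :: "real^'n \<Rightarrow> real^'n^'n" and u v :: "real^'n \<Rightarrow> real"
  assumes "\<delta> > 0" and min: "\<And>y. y \<in> ball x0 \<delta> \<Longrightarrow> K * u x0 - v x0 \<le> K * u y - v y"
    and du: "\<And>y. y \<in> ball x0 \<delta> \<Longrightarrow> u differentiable (at y)"
    and dv: "\<And>y. y \<in> ball x0 \<delta> \<Longrightarrow> v differentiable (at y)"
    and ddu: "\<And>j. pd j u differentiable (at x0)" and ddv: "\<And>j. pd j v differentiable (at x0)"
    and dA: "\<And>i j. (\<lambda>y. A y $ i $ j) differentiable (at x0)"
    and sym: "\<And>i j. A x0 $ i $ j = A x0 $ j $ i"
    and psd: "\<And>\<xi>. 0 \<le> (\<Sum>i\<in>UNIV. \<Sum>j\<in>UNIV. A x0 $ i $ j * \<xi> $ i * \<xi> $ j)"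
  shows "0 \<le> K * div_op A u x0 - div_op A v x0"
proof -
  define g where "g j y = K * pd j u y - pd j v y" for j y
  define H where "H i j = K * pd i (pd j u) x0 - pd i (pd j v) x0" for i j
  have dw: "((\<lambda>y. K * u y - v y) has_derivative (\<lambda>h. \<Sum>j\<in>UNIV. h $ j * g j y)) (at y)"
    if "y \<in> ball x0 \<delta>" for y
  proof -
    have "((\<lambda>y. K * u y - v y) has_derivative
        (\<lambda>h. K * (\<Sum>j\<in>UNIV. h $ j * pd j u y) - (\<Sum>j\<in>UNIV. h $ j * pd j v y))) (at y)"
      using du dv that by (intro has_derivative_diff has_derivative_mult_right has_derivative_pd)
    then show ?thesis by (simp add: g_def sum_distrib_left sum_subtractf algebra_simps)
  qed
  have dg: "(g j has_derivative (\<lambda>h. \<Sum>i\<in>UNIV. h $ i * H i j)) (at x0)" for j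
  proof -
    have "(g j has_derivative
        (\<lambda>h. K * (\<Sum>i\<in>UNIV. h $ i * pd i (pd j u) x0) - (\<Sum>i\<in>UNIV. h $ i * pd i (pd j v) x0))) (at x0)"
      unfolding g_def using ddu ddv by (intro has_derivative_diff has_derivative_mult_right has_derivative_pd)
    then show ?thesis by (simp add: H_def sum_distrib_left sum_subtractf algebra_simps)
  qed
  have "((\<lambda>y. K * u y - v y) has_derivative (\<lambda>h. \<Sum>j\<in>UNIV. h $ j * g j x0)) (at x0)"
    using dw \<open>\<delta> > 0\<close> by simp
  from local_min_gradient_zero[of \<delta> x0 "\<lambda>y. K * u y - v y", OF \<open>\<delta> > 0\<close> min this]
  have "pd j v x0 = K * pd j u x0" for j by (simp add: g_def)
  moreover have "0 \<le> (\<Sum>i\<in>UNIV. \<Sum>j\<in>UNIV. A x0 $ i $ j * H i j)"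
  proof (rule trace_mult_nonneg)
    show "0 \<le> quad_form (\<lambda>i j. A x0 $ i $ j) \<xi>" for \<xi>
      using psd[of "\<chi> i. \<xi> i"] by (simp add: quad_form_def)
    show "0 \<le> quad_form H \<xi>" for \<xi>
      using local_min_hessian_psd[of \<delta> x0 "\<lambda>y. K * u y - v y", OF \<open>\<delta> > 0\<close> min dw dg] .
  qed (use sym in auto)
  ultimately show ?thesis
    unfolding div_op_product_rule[OF dA ddu] div_op_product_rule[OF dA ddv] H_def
    by (simp add: sum_distrib_left sum_subtractf[symmetric] algebra_simps)
qed

lemma min_principle:
  fixes w :: "'a::metric_space \<Rightarrow> real"
  assumes "compact D" "continuous_on D w" "U \<subseteq> D"
    and boundary: "\<And>x. x \<in> D - U \<Longrightarrow> 0 \<le> w x"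
    and interior: "\<And>x. x \<in> U \<Longrightarrow> (\<And>y. y \<in> U \<Longrightarrow> w x \<le> w y) \<Longrightarrow> 0 \<le> w x"
    and "x \<in> D"
  shows "0 \<le> w x"
proof -
  obtain x0 where x0: "x0 \<in> D" "\<And>y. y \<in> D \<Longrightarrow> w x0 \<le> w y"
    using continuous_attains_inf[OF assms(1) _ assms(2)] \<open>x \<in> D\<close> by blast
  have "0 \<le> w x0"
    using boundary[of x0] interior[of x0] x0 \<open>U \<subseteq> D\<close> by blast
  with x0(2)[OF \<open>x \<in> D\<close>] show ?thesis by simp
qed

lemma ratio_bounded_on_compact:
  fixes f g :: "'a::metric_space \<Rightarrow> real"
  assumes "compact S" "continuous_on S f" "continuous_on S g" and pos: "\<And>x. x \<in> S \<Longrightarrow> 0 < g x"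
  shows "\<exists>K>0. \<forall>x\<in>S. f x \<le> K * g x"
proof -
  have "continuous_on S (\<lambda>x. f x / g x)"
    using assms(2,3) by (intro continuous_on_divide) (use pos in force)+
  hence "bounded ((\<lambda>x. f x / g x) ` S)"
    using assms(1) by (intro compact_imp_bounded compact_continuous_image)
  then obtain B where B: "\<And>x. x \<in> S \<Longrightarrow> norm (f x / g x) \<le> B"
    unfolding bounded_iff by blast
  have "f x \<le> max 1 B * g x" if "x \<in> S" for x
  proof -
    have "f x / g x \<le> max 1 B" using B[OF that] abs_ge_self[of "f x / g x"] by simp
    with pos[OF that] show ?thesis by (simp add: divide_le_eq mult.commute)
  qed
  then show ?thesis by (intro exI[of _ "max 1 B"]) auto
qed

lemma comparison_near_obstacle:
  fixes \<Omega> :: "(real^'n) set" and A :: "real^'n \<Rightarrow> real^'n^'n" and \<phi>0 \<phi>1 :: "real^'n \<Rightarrow> real"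
  assumes "compact \<Omega>" and Omega_sub: "\<Omega> \<subseteq> ball 0 R"
    and dA: "\<And>x i j. x \<in> - \<Omega> \<Longrightarrow> (\<lambda>y. A y $ i $ j) differentiable (at x)"
    and A_sym: "\<And>x i j. x \<in> - \<Omega> \<Longrightarrow> A x $ i $ j = A x $ j $ i"
    and A_psd: "\<And>x \<xi>. x \<in> - \<Omega> \<Longrightarrow> 0 \<le> (\<Sum>i\<in>UNIV. \<Sum>j\<in>UNIV. A x $ i $ j * \<xi> $ i * \<xi> $ j)"
    and phi0_C2: "Ck_on 2 (- \<Omega>) \<phi>0" and phi0_cont: "continuous_on (closure (- \<Omega>)) \<phi>0"
    and phi0_eq: "\<And>x. x \<in> - \<Omega> \<Longrightarrow> div_op A \<phi>0 x = 0"
    and phi0_bd: "\<And>x. x \<in> frontier \<Omega> \<Longrightarrow> \<phi>0 x = 0"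
    and phi0_pos: "\<And>x. x \<in> - \<Omega> \<Longrightarrow> 0 < \<phi>0 x"
    and phi1_C2: "Ck_on 2 (- \<Omega>) \<phi>1" and phi1_cont: "continuous_on (closure (- \<Omega>)) \<phi>1"
    and phi1_eq: "\<And>x. x \<in> - \<Omega> \<Longrightarrow> div_op A \<phi>1 x = \<phi>1 x"
    and phi1_bd: "\<And>x. x \<in> frontier \<Omega> \<Longrightarrow> \<phi>1 x = 0"
    and phi1_pos: "\<And>x. x \<in> - \<Omega> \<Longrightarrow> 0 < \<phi>1 x"
  shows "\<exists>K>0. \<forall>x\<in>- \<Omega>. norm x \<le> R \<longrightarrow> \<phi>1 x \<le> K * \<phi>0 x"
proof -
  have sphere_out: "sphere 0 R \<subseteq> - \<Omega>" using Omega_sub by auto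
  hence "sphere 0 R \<subseteq> closure (- \<Omega>)" using closure_subset by blast
  then obtain K where "K > 0" and K: "\<And>x. x \<in> sphere 0 R \<Longrightarrow> \<phi>1 x \<le> K * \<phi>0 x"
    using ratio_bounded_on_compact[of "sphere 0 R" \<phi>1 \<phi>0] sphere_out phi0_pos
      continuous_on_subset[OF phi0_cont] continuous_on_subset[OF phi1_cont] by force
  define w where "w x = K * \<phi>0 x - \<phi>1 x" for x
  define D where "D = closure (- \<Omega>) \<inter> cball 0 R"
  define U where "U = - \<Omega> \<inter> ball 0 R"
  have "open U" unfolding U_def using \<open>compact \<Omega>\<close> compact_imp_closed by blast
  \<comment> \<open>At a minimum of w inside U the operator would give 0 \<le> div_op A w = - \<phi>1 < 0.\<close>
  have no_interior_min: False if "x \<in> U" and min: "\<And>y. y \<in> U \<Longrightarrow> w x \<le> w y" for x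
  proof -
    obtain \<delta> where "\<delta> > 0" "ball x \<delta> \<subseteq> U" using \<open>open U\<close> \<open>x \<in> U\<close> open_contains_ball by blast
    with that have "x \<in> - \<Omega>" "\<And>y. y \<in> ball x \<delta> \<Longrightarrow> y \<in> - \<Omega>" by (auto simp: U_def)
    then have "0 \<le> K * div_op A \<phi>0 x - div_op A \<phi>1 x"
      using \<open>\<delta> > 0\<close> \<open>ball x \<delta> \<subseteq> U\<close> min phi0_C2 phi1_C2 dA A_sym A_psd
      by (intro div_op_diff_nonneg_at_local_min[of \<delta>]) (auto simp: w_def numeral_2_eq_2)
    with \<open>x \<in> - \<Omega>\<close> phi0_eq phi1_eq phi1_pos show False by force
  qed
  have "0 \<le> w x" if "x \<in> D" for x
  proof (rule min_principle[of D w U])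
    show "compact D" unfolding D_def by (intro closed_Int_compact) auto
    show "continuous_on D w" unfolding w_def D_def
      using phi0_cont phi1_cont by (auto intro!: continuous_on_diff continuous_on_mult_left intro: continuous_on_subset)
    show "U \<subseteq> D" unfolding U_def D_def by (auto intro: subsetD[OF closure_subset])
    show "0 \<le> w y" if "y \<in> D - U" for y
    proof (cases "norm y = R")
      case True
      then show ?thesis using K[of y] by (simp add: w_def)
    next
      case False
      with that have "y \<in> frontier \<Omega>"
        by (auto simp: D_def U_def frontier_def closure_complement dest: subsetD[OF closure_subset])
      then show ?thesis by (simp add: w_def phi0_bd phi1_bd)
    qed
  qed (use no_interior_min that in auto)
  then show ?thesis
    using \<open>K > 0\<close> by (auto simp: w_def D_def intro: subsetD[OF closure_subset])
qed

section \<open>Integrals with exponential concentration near a sphere\<close>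

lemma summable_exp_mult_powr:
  fixes q a :: real
  assumes "q > 0"
  shows "summable (\<lambda>k::nat. exp (- q * k) * (1 + real k) powr a)"
proof (rule summable_comparison_test_bigo)
  show "summable (\<lambda>k::nat. norm (exp (- q / 2) ^ k))"
    using assms by (simp add: summable_geometric)
  show "(\<lambda>k::nat. exp (- q * k) * (1 + real k) powr a) \<in> O(\<lambda>k. exp (- q / 2) ^ k)"
    using assms by real_asymp
qed

lemma measure_cball_eq:
  assumes "r \<ge> 0"
  shows "measure lebesgue (cball (0::real^'n) r) = r ^ CARD('n) * measure lborel (ball (0::real^'n) 1)"
proof -
  have "measure lebesgue (cball (0::real^'n) r) = measure lborel (ball (0::real^'n) r)"
    by (simp add: measure_completion content_cball_conv_ball)
  also have "\<dots> = r ^ CARD('n) * measure lborel (ball (0::real^'n) 1)"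
    using content_ball_conv_unit_ball[OF assms, of "0::real^'n"] by simp
  finally show ?thesis .
qed

lemma power_diff_le:
  fixes a b :: real
  assumes "0 \<le> b" "b \<le> a" "m \<ge> 1"
  shows "a ^ m - b ^ m \<le> m * a ^ (m - 1) * (a - b)"
proof -
  have "(\<Sum>i<m. b ^ (m - Suc i) * a ^ i) \<le> (\<Sum>i<m. a ^ (m - 1))"
  proof (rule sum_mono)
    fix i assume "i \<in> {..<m}"
    hence "b ^ (m - Suc i) * a ^ i \<le> a ^ (m - Suc i) * a ^ i"
      using assms by (intro mult_right_mono power_mono) auto
    also have "\<dots> = a ^ (m - 1)" using \<open>i \<in> {..<m}\<close> by (simp flip: power_add)
    finally show "b ^ (m - Suc i) * a ^ i \<le> a ^ (m - 1)" .
  qed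
  with assms have "(a - b) * (\<Sum>i<m. b ^ (m - Suc i) * a ^ i) \<le> (a - b) * (\<Sum>i<m. a ^ (m - 1))"
    by (intro mult_left_mono) auto
  then show ?thesis by (simp add: power_diff_sumr2 algebra_simps)
qed

lemma measure_shell_le:
  "measure lebesgue (cball (0::real^'n) r - cball 0 (r - 1))
     \<le> CARD('n) * measure lborel (ball (0::real^'n) 1) * max 1 r ^ (CARD('n) - 1)"
proof -
  define n where "n = CARD('n)"
  define \<omega> where "\<omega> = measure lborel (ball (0::real^'n) 1)"
  have "n \<ge> 1" "\<omega> \<ge> 0" by (simp_all add: n_def \<omega>_def Suc_leI)
  show ?thesis
  proof (cases "r \<ge> 1")
    case True
    have "measure lebesgue (cball (0::real^'n) r - cball 0 (r - 1))
        = measure lebesgue (cball (0::real^'n) r) - measure lebesgue (cball (0::real^'n) (r - 1))"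
      using lmeasurable_cball[of "0::real^'n" r] by (intro measure_Diff) (auto simp: fmeasurable_def)
    also have "\<dots> = \<omega> * (r ^ n - (r - 1) ^ n)"
      using True measure_cball_eq[of r, where 'n='n] measure_cball_eq[of "r - 1", where 'n='n]
      by (simp add: n_def \<omega>_def algebra_simps)
    also have "\<dots> \<le> \<omega> * (n * r ^ (n - 1) * (r - (r - 1)))"
      using True \<open>n \<ge> 1\<close> \<open>\<omega> \<ge> 0\<close> by (intro mult_left_mono power_diff_le) auto
    finally show ?thesis using True by (simp add: n_def \<omega>_def mult_ac)
  next
    case False
    have "measure lebesgue (cball (0::real^'n) r - cball 0 (r - 1)) \<le> measure lebesgue (cball (0::real^'n) 1)"
      using False by (intro measure_mono_fmeasurable) auto
    also have "\<dots> = \<omega>" using measure_cball_eq[of 1, where 'n='n] by (simp add: \<omega>_def)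
    also have "\<dots> \<le> n * \<omega>" using \<open>n \<ge> 1\<close> \<open>\<omega> \<ge> 0\<close> by (simp add: mult_le_cancel_right1)
    finally show ?thesis using False by (simp add: n_def \<omega>_def)
  qed
qed

lemma shell_weight_le:
  fixes T R0 \<gamma> :: real and k :: nat
  assumes "R0 > 0" "T \<ge> R0"
  shows "max 1 (T - k) powr \<gamma> \<le> max 1 (R0 powr (- \<gamma>)) * T powr \<gamma> * (1 + real k) powr \<bar>\<gamma>\<bar>"
proof -
  define a where "a = max 1 (T - k)"
  have "T > 0" "a \<ge> 1" using assms by (auto simp: a_def)
  have k1: "(1 + real k) powr \<bar>\<gamma>\<bar> \<ge> 1" by (rule ge_one_powr_ge_zero) auto
  have "a powr \<gamma> \<le> max 1 (R0 powr (- \<gamma>)) * T powr \<gamma>" if "\<gamma> \<ge> 0"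
  proof -
    have "a powr \<gamma> \<le> max 1 T powr \<gamma>" using that \<open>a \<ge> 1\<close> by (intro powr_mono2) (auto simp: a_def)
    also have "max 1 T powr \<gamma> \<le> max 1 (R0 powr (- \<gamma>)) * T powr \<gamma>"
    proof (cases "T \<ge> 1")
      case True then show ?thesis using \<open>T > 0\<close> by (simp add: mult_le_cancel_right1)
    next
      case False
      have "R0 powr \<gamma> \<le> T powr \<gamma>" using assms that by (intro powr_mono2) auto
      hence "1 \<le> R0 powr (- \<gamma>) * T powr \<gamma>" using assms by (simp add: powr_minus field_simps)
      also have "\<dots> \<le> max 1 (R0 powr (- \<gamma>)) * T powr \<gamma>" by (intro mult_right_mono) auto
      finally show ?thesis using False by simp
    qed
    finally show ?thesis .
  qed
  moreover have "a powr \<gamma> \<le> T powr \<gamma> * (1 + real k) powr \<bar>\<gamma>\<bar>" if "\<gamma> < 0"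
  proof -
    have "T \<le> (1 + real k) * a"
    proof (cases "T - k \<ge> 1")
      case True
      have "0 \<le> real k * (T - real k - 1)" using True by simp
      then show ?thesis using True by (simp add: a_def algebra_simps)
    qed (auto simp: a_def)
    hence "T / (1 + real k) \<le> a" by (simp add: divide_le_eq mult.commute)
    hence "a powr \<gamma> \<le> (T / (1 + real k)) powr \<gamma>" using that \<open>T > 0\<close> by (intro powr_mono2') auto
    also have "\<dots> = T powr \<gamma> * (1 + real k) powr \<bar>\<gamma>\<bar>"
      using \<open>T > 0\<close> that by (simp add: powr_divide powr_minus_divide)
    finally show ?thesis .
  qed
  moreover have "T powr \<gamma> * (1 + real k) powr \<bar>\<gamma>\<bar> \<le> max 1 (R0 powr (- \<gamma>)) * T powr \<gamma> * (1 + real k) powr \<bar>\<gamma>\<bar>"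
    using mult_right_mono[of 1 "max 1 (R0 powr (- \<gamma>))" "T powr \<gamma> * (1 + real k) powr \<bar>\<gamma>\<bar>"]
    by (simp add: mult.assoc)
  moreover have "max 1 (R0 powr (- \<gamma>)) * T powr \<gamma> \<le> max 1 (R0 powr (- \<gamma>)) * T powr \<gamma> * (1 + real k) powr \<bar>\<gamma>\<bar>"
    using mult_left_mono[OF k1, of "max 1 (R0 powr (- \<gamma>)) * T powr \<gamma>"] by simp
  ultimately show ?thesis unfolding a_def by (cases "\<gamma> \<ge> 0") (auto intro: order_trans)
qed

lemma integral_le_shell_sum:
  fixes S :: "(real^'n) set" and f :: "real^'n \<Rightarrow> real" and b :: "nat \<Rightarrow> real"
  assumes "S \<subseteq> cball 0 T" "S \<in> sets lebesgue" "f integrable_on S"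
    and b: "\<And>k. 0 \<le> b k" and f: "\<And>x. x \<in> S \<Longrightarrow> f x \<le> b (nat \<lfloor>T - norm x\<rfloor>)"
  shows "integral S f
           \<le> (\<Sum>k\<le>nat \<lceil>T\<rceil>. b k * measure lebesgue (cball (0::real^'n) (T - k) - cball 0 (T - k - 1)))"
proof -
  define N where "N = nat \<lceil>T\<rceil>"
  define A where "A k = cball (0::real^'n) (T - k) - cball 0 (T - k - 1)" for k :: nat
  define st where "st x = (\<Sum>k\<le>N. b k * indicat_real (A k) x)" for x
  have A: "A k \<in> lmeasurable" "A k \<inter> S \<in> lmeasurable" for k
    using assms(1,2) by (auto simp: A_def intro!: bounded_set_imp_lmeasurable intro: bounded_subset[of "cball 0 T"])
  have f_le_st: "f x \<le> st x" if "x \<in> S" for x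
  proof -
    define k where "k = nat \<lfloor>T - norm x\<rfloor>"
    have "norm x \<le> T" using that assms(1) by auto
    hence "real k \<le> T - norm x" "T - norm x < real k + 1" by (auto simp: k_def)
    hence "x \<in> A k" by (auto simp: A_def)
    have "real_of_int \<lfloor>T - norm x\<rfloor> \<le> real_of_int \<lceil>T\<rceil>"
      using of_int_floor_le[of "T - norm x"] le_of_int_ceiling[of T] norm_ge_zero[of x] by linarith
    hence "k \<le> N" unfolding k_def N_def by (intro nat_mono) simp
    have "f x \<le> b k * indicat_real (A k) x" using f[OF that] \<open>x \<in> A k\<close> by (simp add: k_def)
    also have "\<dots> \<le> st x" unfolding st_def using \<open>k \<le> N\<close> b by (intro member_le_sum) auto
    finally show ?thesis .
  qed
  have integrable: "(\<lambda>x. b k * indicat_real (A k) x) integrable_on S" for k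
    using integrable_on_indicator[of "A k" S] A(2) by (intro integrable_on_mult_right) auto
  have "st integrable_on S" unfolding st_def by (intro integrable_sum integrable) auto
  with assms(3) have "integral S f \<le> integral S st" using f_le_st by (rule integral_le)
  also have "\<dots> = (\<Sum>k\<le>N. b k * measure lebesgue (A k \<inter> S))"
    unfolding st_def using A(2) by (subst integral_sum) (auto intro: integrable simp: integral_indicator)
  also have "\<dots> \<le> (\<Sum>k\<le>N. b k * measure lebesgue (A k))"
    using A b by (intro sum_mono mult_left_mono measure_mono_fmeasurable) auto
  finally show ?thesis by (simp add: A_def N_def)
qed

lemma radial_weight_le_shell_weight:
  fixes r T \<beta> q :: real and k :: nat
  assumes "0 \<le> r" "\<beta> \<ge> 0" "q \<ge> 0" and k: "real k \<le> T - r" "T - r < real k + 1"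
  shows "(1 + r) powr (- \<beta>) * exp (q * (r - T)) \<le> exp (- q * k) * max 1 (T - k) powr (- \<beta>)"
proof -
  have "(1 + r) powr (- \<beta>) \<le> max 1 (T - k) powr (- \<beta>)"
    using k assms by (intro powr_mono2') auto
  moreover have "exp (q * (r - T)) \<le> exp (- q * k)"
    using mult_left_mono[of "r - T" "- real k" q] k assms by simp
  ultimately show ?thesis by (simp add: mult_mono mult.commute)
qed

lemma shell_term_le:
  fixes T R0 \<beta> q :: real and k :: nat
  assumes "R0 > 0" "T \<ge> R0"
  defines "\<gamma> \<equiv> real CARD('n) - 1 - \<beta>"
  shows "exp (- q * k) * max 1 (T - k) powr (- \<beta>)
           * measure lebesgue (cball (0::real^'n) (T - k) - cball 0 (T - k - 1))
    \<le> CARD('n) * measure lborel (ball (0::real^'n) 1) * max 1 (R0 powr (- \<gamma>)) * T powr \<gamma>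
           * (exp (- q * k) * (1 + real k) powr \<bar>\<gamma>\<bar>)"
proof -
  define n where "n = CARD('n)"
  define \<omega> where "\<omega> = measure lborel (ball (0::real^'n) 1)"
  define a where "a = max 1 (T - k)"
  have "n \<ge> 1" "\<omega> \<ge> 0" "a \<ge> 1" by (simp_all add: n_def \<omega>_def a_def Suc_leI)
  have a_pow: "a powr (- \<beta>) * a ^ (n - 1) = a powr \<gamma>"
    using \<open>a \<ge> 1\<close> \<open>n \<ge> 1\<close> by (simp add: \<gamma>_def n_def powr_realpow[symmetric] powr_add[symmetric] of_nat_diff)
  have "exp (- q * k) * a powr (- \<beta>) * measure lebesgue (cball (0::real^'n) (T - k) - cball 0 (T - k - 1))
      \<le> exp (- q * k) * a powr (- \<beta>) * (n * \<omega> * a ^ (n - 1))"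
    using measure_shell_le[of "T - k", where 'n='n] by (intro mult_left_mono) (simp_all add: n_def \<omega>_def a_def)
  also have "\<dots> = n * \<omega> * exp (- q * k) * a powr \<gamma>"
    by (simp add: mult_ac flip: a_pow)
  also have "\<dots> \<le> n * \<omega> * exp (- q * k) * (max 1 (R0 powr (- \<gamma>)) * T powr \<gamma> * (1 + real k) powr \<bar>\<gamma>\<bar>)"
    using shell_weight_le[OF assms(1,2), where \<gamma>=\<gamma> and k=k] \<open>\<omega> \<ge> 0\<close>
    by (intro mult_left_mono) (simp_all add: a_def)
  finally show ?thesis by (simp add: n_def \<omega>_def a_def mult_ac)
qed

lemma radial_integral_bound:
  fixes R0 \<beta> q c :: real
  assumes "R0 > 0" "\<beta> \<ge> 0" "q > 0" "c \<ge> 0"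
  shows "\<exists>C>0. \<forall>T (S :: (real^'n) set) f. T \<ge> R0 \<longrightarrow> S \<subseteq> cball 0 T \<longrightarrow> S \<in> sets lebesgue
     \<longrightarrow> f integrable_on S \<longrightarrow> (\<forall>x\<in>S. f x \<le> c * (1 + norm x) powr (- \<beta>) * exp (q * (norm x - T)))
     \<longrightarrow> integral S f \<le> C * T powr (real CARD('n) - 1 - \<beta>)"
proof -
  define \<gamma> where "\<gamma> = real CARD('n) - 1 - \<beta>"
  define S0 where "S0 = (\<Sum>k. exp (- q * k) * (1 + real k) powr \<bar>\<gamma>\<bar>)"
  define C' where "C' = c * CARD('n) * measure lborel (ball (0::real^'n) 1) * max 1 (R0 powr (- \<gamma>))"
  have "C' \<ge> 0" using \<open>c \<ge> 0\<close> by (simp add: C'_def)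
  have partial_sums: "(\<Sum>k\<le>N. exp (- q * k) * (1 + real k) powr \<bar>\<gamma>\<bar>) \<le> S0" for N
    unfolding S0_def using summable_exp_mult_powr[OF \<open>q > 0\<close>] by (intro sum_le_suminf) auto
  hence "S0 \<ge> 0" by (rule order_trans[rotated]) (intro sum_nonneg, simp)
  have "integral S f \<le> (C' * S0 + 1) * T powr \<gamma>"
    if "T \<ge> R0" "S \<subseteq> cball 0 T" "S \<in> sets lebesgue" "f integrable_on S"
      and f: "\<forall>x\<in>S. f x \<le> c * (1 + norm x) powr (- \<beta>) * exp (q * (norm x - T))"
    for T and S :: "(real^'n) set" and f
  proof -
    define b where "b k = c * (exp (- q * k) * max 1 (T - k) powr (- \<beta>))" for k :: nat
    have "f x \<le> b (nat \<lfloor>T - norm x\<rfloor>)" if "x \<in> S" for x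
    proof -
      define k where "k = nat \<lfloor>T - norm x\<rfloor>"
      have "norm x \<le> T" using that \<open>S \<subseteq> cball 0 T\<close> by auto
      hence "real k \<le> T - norm x" "T - norm x < real k + 1" by (auto simp: k_def)
      with radial_weight_le_shell_weight[of "norm x" \<beta> q k T] assms
      have "c * ((1 + norm x) powr (- \<beta>) * exp (q * (norm x - T))) \<le> b k"
        unfolding b_def by (intro mult_left_mono) auto
      moreover have "f x \<le> c * ((1 + norm x) powr (- \<beta>) * exp (q * (norm x - T)))"
        using f that by (simp add: mult.assoc)
      ultimately show ?thesis unfolding k_def by linarith
    qed
    with that \<open>c \<ge> 0\<close> have "integral S f
        \<le> (\<Sum>k\<le>nat \<lceil>T\<rceil>. b k * measure lebesgue (cball (0::real^'n) (T - k) - cball 0 (T - k - 1)))"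
      by (intro integral_le_shell_sum) (auto simp: b_def)
    also have "\<dots> \<le> (\<Sum>k\<le>nat \<lceil>T\<rceil>. C' * T powr \<gamma> * (exp (- q * k) * (1 + real k) powr \<bar>\<gamma>\<bar>))"
      using shell_term_le[OF \<open>R0 > 0\<close> \<open>T \<ge> R0\<close>, where 'n='n and \<beta>=\<beta> and q=q] \<open>c \<ge> 0\<close>
      unfolding b_def C'_def \<gamma>_def by (intro sum_mono) (simp add: mult_left_mono mult.assoc)
    also have "\<dots> = C' * T powr \<gamma> * (\<Sum>k\<le>nat \<lceil>T\<rceil>. exp (- q * k) * (1 + real k) powr \<bar>\<gamma>\<bar>)"
      by (rule sum_distrib_left[symmetric])
    also have "\<dots> \<le> C' * T powr \<gamma> * S0"
      using partial_sums \<open>C' \<ge> 0\<close> by (intro mult_left_mono) auto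
    also have "\<dots> \<le> (C' * S0 + 1) * T powr \<gamma>" by (simp add: algebra_simps)
    finally show ?thesis .
  qed
  moreover have "C' * S0 + 1 > 0" using \<open>C' \<ge> 0\<close> \<open>S0 \<ge> 0\<close> by (simp add: add_nonneg_pos)
  ultimately show ?thesis unfolding \<gamma>_def by blast
qed

lemma bounded_continuous_integrable_on:
  fixes f :: "real^'n \<Rightarrow> real"
  assumes "continuous_on S f" "S \<in> sets lebesgue" "bounded S" "\<And>x. x \<in> S \<Longrightarrow> norm (f x) \<le> B"
  shows "f integrable_on S"
proof (rule measurable_bounded_by_integrable_imp_integrable)
  show "f \<in> borel_measurable (lebesgue_on S)"
    using assms(1,2) by (rule continuous_imp_measurable_on_sets_lebesgue)
  show "(\<lambda>_. B) integrable_on S"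
    using assms(2,3) by (intro integrable_on_const bounded_set_imp_lmeasurable)
qed (use assms in auto)

lemma exterior_integral_bound:
  fixes \<Omega> :: "(real^'n) set" and f :: "real \<Rightarrow> real^'n \<Rightarrow> real"
  assumes "closed \<Omega>" "R > 0" "\<beta> \<ge> 0" "q > 0" "c \<ge> 0"
    and cont: "\<And>t. continuous_on (- \<Omega>) (f t)" and nonneg: "\<And>t x. 0 \<le> f t x"
    and bound: "\<And>t x. t \<ge> 0 \<Longrightarrow> x \<in> - \<Omega> \<Longrightarrow>
                  f t x \<le> c * (1 + norm x) powr (- \<beta>) * exp (q * (norm x - (t + R)))"
  shows "\<exists>C>0. \<forall>t\<ge>0. f t integrable_on {x. x \<notin> \<Omega> \<and> norm x \<le> t + R}
           \<and> integral {x. x \<notin> \<Omega> \<and> norm x \<le> t + R} (f t) \<le> C * (t + R) powr (real CARD('n) - 1 - \<beta>)"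
proof -
  obtain C where "C > 0" and C: "\<And>T (S :: (real^'n) set) g. T \<ge> R \<Longrightarrow> S \<subseteq> cball 0 T \<Longrightarrow> S \<in> sets lebesgue
     \<Longrightarrow> g integrable_on S \<Longrightarrow> (\<forall>x\<in>S. g x \<le> c * (1 + norm x) powr (- \<beta>) * exp (q * (norm x - T)))
     \<Longrightarrow> integral S g \<le> C * T powr (real CARD('n) - 1 - \<beta>)"
    using radial_integral_bound[OF \<open>R > 0\<close> \<open>\<beta> \<ge> 0\<close> \<open>q > 0\<close> \<open>c \<ge> 0\<close>] by blast
  have "f t integrable_on S \<and> integral S (f t) \<le> C * (t + R) powr (real CARD('n) - 1 - \<beta>)"
    if "t \<ge> 0" and S: "S = {x. x \<notin> \<Omega> \<and> norm x \<le> t + R}" for t S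
  proof
    have "S = - \<Omega> \<inter> cball 0 (t + R)" using S by auto
    hence "S \<in> sets lebesgue" "bounded S" "S \<subseteq> cball 0 (t + R)" "S \<subseteq> - \<Omega>"
      using \<open>closed \<Omega>\<close> by (auto intro: bounded_subset)
    have "norm (f t x) \<le> c" if "x \<in> S" for x
    proof -
      have "(1 + norm x) powr (- \<beta>) \<le> 1" "exp (q * (norm x - (t + R))) \<le> 1"
        using powr_mono2'[of "- \<beta>" 1 "1 + norm x"] \<open>\<beta> \<ge> 0\<close> \<open>q > 0\<close> that S
        by (auto simp: mult_nonneg_nonpos)
      hence "c * (1 + norm x) powr (- \<beta>) * exp (q * (norm x - (t + R))) \<le> c * 1 * 1"
        using \<open>c \<ge> 0\<close> by (intro mult_mono mult_left_mono) auto
      moreover have "f t x \<le> c * (1 + norm x) powr (- \<beta>) * exp (q * (norm x - (t + R)))"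
        using bound[OF \<open>t \<ge> 0\<close>] that \<open>S \<subseteq> - \<Omega>\<close> by blast
      ultimately show ?thesis using nonneg[of t x] by simp
    qed
    then show "f t integrable_on S"
      using continuous_on_subset[OF cont \<open>S \<subseteq> - \<Omega>\<close>] \<open>S \<in> sets lebesgue\<close> \<open>bounded S\<close>
      by (intro bounded_continuous_integrable_on)
    then show "integral S (f t) \<le> C * (t + R) powr (real CARD('n) - 1 - \<beta>)"
      using C[of "t + R" S "f t"] bound \<open>t \<ge> 0\<close> \<open>R > 0\<close> \<open>S \<in> sets lebesgue\<close> \<open>S \<subseteq> cball 0 (t + R)\<close> \<open>S \<subseteq> - \<Omega>\<close>
      by auto
  qed
  with \<open>C > 0\<close> show ?thesis by blast
qed

lemma bounded_below_outside_ball: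
  fixes \<Omega> :: "(real^'n) set" and \<phi> :: "real^'n \<Rightarrow> real"
  assumes "\<Omega> \<subseteq> ball 0 R" "continuous_on (- \<Omega>) \<phi>" and pos: "\<And>x. x \<in> - \<Omega> \<Longrightarrow> 0 < \<phi> x"
    and lim: "(\<phi> \<longlongrightarrow> l) at_infinity" and "l > 0"
  shows "\<exists>c>0. \<forall>x. R \<le> norm x \<longrightarrow> c \<le> \<phi> x"
proof -
  obtain B where B: "\<And>x. B \<le> norm x \<Longrightarrow> l / 2 < \<phi> x"
    using order_tendstoD(1)[OF lim, of "l / 2"] \<open>l > 0\<close> unfolding eventually_at_infinity by auto
  define Ann where "Ann = cball (0::real^'n) (max B R) - ball 0 R"
  have "Ann \<subseteq> - \<Omega>" using assms(1) by (auto simp: Ann_def)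
  have "compact Ann" unfolding Ann_def by (intro compact_diff) auto
  moreover have "continuous_on Ann \<phi>" using continuous_on_subset[OF assms(2) \<open>Ann \<subseteq> - \<Omega>\<close>] .
  moreover have "\<And>x. x \<in> Ann \<Longrightarrow> 0 < \<phi> x" using pos \<open>Ann \<subseteq> - \<Omega>\<close> by blast
  ultimately obtain K where "K > 0" and K: "\<And>x. x \<in> Ann \<Longrightarrow> 1 \<le> K * \<phi> x"
    using ratio_bounded_on_compact[of Ann "\<lambda>_. 1" \<phi>] by auto
  have "min (l / 2) (1 / K) \<le> \<phi> x" if "R \<le> norm x" for x
  proof (cases "B \<le> norm x")
    case True with B[of x] show ?thesis by simp
  next
    case False
    with that have "1 \<le> K * \<phi> x" by (intro K) (auto simp: Ann_def)
    with \<open>K > 0\<close> have "1 / K \<le> \<phi> x" by (simp add: field_simps)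
    then show ?thesis by simp
  qed
  with \<open>l > 0\<close> \<open>K > 0\<close> show ?thesis by (intro exI[of _ "min (l / 2) (1 / K)"]) auto
qed

lemma integrand_bound_far:
  fixes a c0 C1 \<gamma> u0 u1 r t :: real
  assumes "a > 0" "0 < c0" "c0 \<le> u0" "0 < u1" "0 < C1" "0 \<le> r"
    and u1: "u1 \<le> C1 * (1 + r) powr (- \<gamma>) * exp r"
  shows "u0 powr (- a) * (u1 * exp (- t)) powr (1 + a)
     \<le> c0 powr (- a) * C1 powr (1 + a) * ((1 + r) powr (- (\<gamma> * (1 + a))) * exp ((1 + a) * (r - t)))"
proof -
  have u0_le: "u0 powr (- a) \<le> c0 powr (- a)"
    using assms(1-3) by (intro powr_mono2') auto
  have "u1 * exp (- t) \<le> C1 * (1 + r) powr (- \<gamma>) * exp r * exp (- t)"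
    using u1 by (rule mult_right_mono) simp
  also have "\<dots> = C1 * (1 + r) powr (- \<gamma>) * exp (r - t)"
    by (simp add: mult.assoc flip: exp_add)
  finally have "(u1 * exp (- t)) powr (1 + a) \<le> (C1 * (1 + r) powr (- \<gamma>) * exp (r - t)) powr (1 + a)"
    using assms by (intro powr_mono2) auto
  also have "\<dots> = C1 powr (1 + a) * ((1 + r) powr (- \<gamma>)) powr (1 + a) * exp (r - t) powr (1 + a)"
    using assms by (simp add: powr_mult)
  also have "\<dots> = C1 powr (1 + a) * ((1 + r) powr (- (\<gamma> * (1 + a))) * exp ((1 + a) * (r - t)))"
    by (simp add: powr_powr exp_powr_real mult.commute mult.left_commute)
  finally show ?thesis
    using mult_mono[OF u0_le] by (simp add: mult.assoc)
qed

lemma integrand_bound_near: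
  fixes a K M u0 u1 t :: real
  assumes "a > 0" "0 < K" "0 < u0" "0 < u1" "u1 \<le> K * u0" "u1 \<le> M"
  shows "u0 powr (- a) * (u1 * exp (- t)) powr (1 + a) \<le> K powr a * M * exp (- ((1 + a) * t))"
proof -
  have "u0 powr (- a) \<le> (u1 / K) powr (- a)"
    using assms by (intro powr_mono2') (auto simp: divide_le_eq mult.commute)
  also have "\<dots> = K powr a * u1 powr (- a)"
    using assms by (simp add: powr_divide powr_minus_divide)
  finally have u0_le: "u0 powr (- a) \<le> K powr a * u1 powr (- a)" .
  have "(u1 * exp (- t)) powr (1 + a) = u1 powr (1 + a) * exp (- ((1 + a) * t))"
    using assms by (simp add: powr_mult exp_powr_real mult.commute)
  hence "u0 powr (- a) * (u1 * exp (- t)) powr (1 + a)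
      \<le> K powr a * (u1 powr (- a) * u1 powr (1 + a)) * exp (- ((1 + a) * t))"
    using mult_right_mono[OF u0_le, of "(u1 * exp (- t)) powr (1 + a)"] by (simp add: mult.assoc)
  also have "u1 powr (- a) * u1 powr (1 + a) = u1"
    using assms by (simp flip: powr_add)
  also have "K powr a * u1 * exp (- ((1 + a) * t)) \<le> K powr a * M * exp (- ((1 + a) * t))"
    using assms by (intro mult_right_mono mult_left_mono) auto
  finally show ?thesis .
qed

lemma exp_le_radial_weight:
  fixes P R r t \<gamma> :: real
  assumes "P > 0" "\<gamma> \<ge> 0" "0 \<le> r" "r \<le> R"
  shows "exp (- (P * t))
    \<le> exp (P * R) * (1 + R) powr (\<gamma> * P) * ((1 + r) powr (- (\<gamma> * P)) * exp (P * (r - (t + R))))"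
proof -
  have "(1 + R) powr (- (\<gamma> * P)) \<le> (1 + r) powr (- (\<gamma> * P))"
    using assms by (intro powr_mono2') auto
  moreover have "exp (P * (0 - (t + R))) \<le> exp (P * (r - (t + R)))"
    using assms by simp
  ultimately have "(1 + R) powr (- (\<gamma> * P)) * exp (P * (0 - (t + R)))
      \<le> (1 + r) powr (- (\<gamma> * P)) * exp (P * (r - (t + R)))"
    by (intro mult_mono) auto
  hence "(1 + R) powr (\<gamma> * P) * ((1 + R) powr (- (\<gamma> * P)) * exp (P * (0 - (t + R))))
      \<le> (1 + R) powr (\<gamma> * P) * ((1 + r) powr (- (\<gamma> * P)) * exp (P * (r - (t + R))))"
    by (intro mult_left_mono) auto
  moreover have "(1 + R) powr (\<gamma> * P) * ((1 + R) powr (- (\<gamma> * P)) * exp (P * (0 - (t + R))))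
      = exp (P * (0 - (t + R)))"
    using assms by (simp add: mult.assoc[symmetric] flip: powr_add)
  ultimately have "exp (P * (0 - (t + R)))
      \<le> (1 + R) powr (\<gamma> * P) * ((1 + r) powr (- (\<gamma> * P)) * exp (P * (r - (t + R))))"
    by linarith
  hence "exp (P * R) * exp (P * (0 - (t + R)))
      \<le> exp (P * R) * ((1 + R) powr (\<gamma> * P) * ((1 + r) powr (- (\<gamma> * P)) * exp (P * (r - (t + R)))))"
    by (intro mult_left_mono) auto
  moreover have "exp (P * R) * exp (P * (0 - (t + R))) = exp (- (P * t))"
    by (simp add: algebra_simps flip: exp_add)
  ultimately show ?thesis by (simp only: mult.assoc)
qed

lemma integrand_pointwise_bound:
  fixes a C1 K c0 R \<gamma> :: real
  assumes "a > 0" "C1 > 0" "K > 0" "c0 > 0" "\<gamma> \<ge> 0"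
  shows "\<exists>C\<ge>0. \<forall>u0 u1 r t. 0 \<le> r \<longrightarrow> 0 < u0 \<longrightarrow> 0 < u1 \<longrightarrow> u1 \<le> C1 * (1 + r) powr (- \<gamma>) * exp r
      \<longrightarrow> (R \<le> r \<longrightarrow> c0 \<le> u0) \<longrightarrow> (r < R \<longrightarrow> u1 \<le> K * u0)
      \<longrightarrow> u0 powr (- a) * (u1 * exp (- t)) powr (1 + a)
          \<le> C * ((1 + r) powr (- (\<gamma> * (1 + a))) * exp ((1 + a) * (r - (t + R))))"
proof -
  define P where "P = 1 + a"
  define C_far where "C_far = c0 powr (- a) * C1 powr P"
  define C_near where "C_near = K powr a * (C1 * exp R) * (1 + R) powr (\<gamma> * P)"
  define C where "C = exp (P * R) * max C_far C_near"
  have "C \<ge> 0" by (simp add: C_def C_far_def le_max_iff_disj)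
  moreover have "u0 powr (- a) * (u1 * exp (- t)) powr P
      \<le> C * ((1 + r) powr (- (\<gamma> * P)) * exp (P * (r - (t + R))))"
    if "0 \<le> r" "0 < u0" "0 < u1" and u1: "u1 \<le> C1 * (1 + r) powr (- \<gamma>) * exp r"
      and far: "R \<le> r \<Longrightarrow> c0 \<le> u0" and near: "r < R \<Longrightarrow> u1 \<le> K * u0" for u0 u1 r t
  proof -
    define G where "G = (1 + r) powr (- (\<gamma> * P)) * exp (P * (r - (t + R)))"
    have "G \<ge> 0" by (simp add: G_def)
    show ?thesis
    proof (cases "R \<le> r")
      case True
      have "u0 powr (- a) * (u1 * exp (- t)) powr P
          \<le> C_far * ((1 + r) powr (- (\<gamma> * P)) * exp (P * (r - t)))"
        using integrand_bound_far[OF \<open>a > 0\<close> _ far[OF True] \<open>0 < u1\<close> \<open>C1 > 0\<close> \<open>0 \<le> r\<close> u1] assms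
        by (simp add: C_far_def P_def)
      also have "exp (P * (r - t)) = exp (P * R) * exp (P * (r - (t + R)))"
        by (simp add: algebra_simps flip: exp_add)
      also have "C_far * ((1 + r) powr (- (\<gamma> * P)) * (exp (P * R) * exp (P * (r - (t + R)))))
          = exp (P * R) * C_far * G"
        by (simp only: G_def mult_ac)
      also have "\<dots> \<le> C * G"
        using \<open>G \<ge> 0\<close> by (intro mult_right_mono) (auto simp: C_def)
      finally show ?thesis by (simp add: G_def)
    next
      case False
      have "(1 + r) powr (- \<gamma>) \<le> 1"
        using powr_mono2'[of "- \<gamma>" 1 "1 + r"] \<open>0 \<le> r\<close> \<open>\<gamma> \<ge> 0\<close> by simp
      hence "C1 * (1 + r) powr (- \<gamma>) * exp r \<le> C1 * 1 * exp R"
        using False \<open>C1 > 0\<close> by (intro mult_mono mult_left_mono) auto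
      with u1 have "u1 \<le> C1 * exp R" by simp
      hence "u0 powr (- a) * (u1 * exp (- t)) powr P \<le> K powr a * (C1 * exp R) * exp (- (P * t))"
        using integrand_bound_near[OF \<open>a > 0\<close> \<open>K > 0\<close> \<open>0 < u0\<close> \<open>0 < u1\<close> near] False
        by (simp add: P_def)
      also have "\<dots> \<le> K powr a * (C1 * exp R) * (exp (P * R) * (1 + R) powr (\<gamma> * P) * G)"
        using exp_le_radial_weight[of P \<gamma> r R t] False assms \<open>0 \<le> r\<close>
        by (intro mult_left_mono) (auto simp: G_def P_def)
      also have "\<dots> = exp (P * R) * C_near * G" by (simp only: C_near_def mult_ac)
      also have "\<dots> \<le> C * G"
        using \<open>G \<ge> 0\<close> by (intro mult_right_mono) (auto simp: C_def)
      finally show ?thesis by (simp add: G_def)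
    qed
  qed
  ultimately show ?thesis unfolding P_def by blast
qed

lemma integrand_decay:
  fixes \<phi>0 \<phi>1 :: "real^'n \<Rightarrow> real"
  assumes "p > 1" "K > 0" "c0 > 0" "C1 > 0"
    and pos0: "\<And>x. x \<in> X \<Longrightarrow> 0 < \<phi>0 x"
    and bound1: "\<And>x. x \<in> X \<Longrightarrow> 0 < \<phi>1 x
                     \<and> \<phi>1 x \<le> C1 * (1 + norm x) powr (- (real CARD('n) - 1) / 2) * exp (norm x)"
    and far: "\<And>x. R \<le> norm x \<Longrightarrow> c0 \<le> \<phi>0 x" and near: "\<And>x. x \<in> X \<Longrightarrow> norm x \<le> R \<Longrightarrow> \<phi>1 x \<le> K * \<phi>0 x"
  shows "\<exists>C\<ge>0. \<forall>t x. x \<in> X \<longrightarrow> \<phi>0 x powr (- 1 / (p - 1)) * (\<phi>1 x * exp (- t)) powr (p / (p - 1))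
           \<le> C * (1 + norm x) powr (- ((real CARD('n) - 1) * (p / (p - 1)) / 2))
               * exp (p / (p - 1) * (norm x - (t + R)))"
proof -
  define a where "a = 1 / (p - 1)"
  have "a > 0" and exps: "- 1 / (p - 1) = - a" "p / (p - 1) = 1 + a"
      "(real CARD('n) - 1) / 2 * (1 + a) = (real CARD('n) - 1) * (p / (p - 1)) / 2"
    using \<open>p > 1\<close> by (auto simp: a_def field_simps)
  obtain C where "C \<ge> 0" and C: "\<forall>u0 u1 r t. 0 \<le> r \<longrightarrow> 0 < u0 \<longrightarrow> 0 < u1
      \<longrightarrow> u1 \<le> C1 * (1 + r) powr (- ((real CARD('n) - 1) / 2)) * exp r
      \<longrightarrow> (R \<le> r \<longrightarrow> c0 \<le> u0) \<longrightarrow> (r < R \<longrightarrow> u1 \<le> K * u0)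
      \<longrightarrow> u0 powr (- a) * (u1 * exp (- t)) powr (1 + a)
          \<le> C * ((1 + r) powr (- ((real CARD('n) - 1) / 2 * (1 + a))) * exp ((1 + a) * (r - (t + R))))"
    using integrand_pointwise_bound[OF \<open>a > 0\<close> \<open>C1 > 0\<close> \<open>K > 0\<close> \<open>c0 > 0\<close>, of "(real CARD('n) - 1) / 2" R]
    by auto
  have "\<phi>0 x powr (- a) * (\<phi>1 x * exp (- t)) powr (1 + a)
      \<le> C * ((1 + norm x) powr (- ((real CARD('n) - 1) / 2 * (1 + a))) * exp ((1 + a) * (norm x - (t + R))))"
    if "x \<in> X" for t x
  proof -
    have "\<phi>1 x \<le> C1 * (1 + norm x) powr (- ((real CARD('n) - 1) / 2)) * exp (norm x)"
      using bound1[OF that] by (simp add: minus_divide_left)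
    from C[rule_format, OF norm_ge_zero _ _ this] pos0 bound1 far near that show ?thesis by auto
  qed
  with \<open>C \<ge> 0\<close> show ?thesis unfolding exps by (auto simp: mult.assoc)
qed

theorem lemma2p5:
  fixes \<Omega> :: "(real^'n) set" and R p :: real
    and A :: "real^'n \<Rightarrow> real^'n^'n" and \<phi>0 \<phi>1 :: "real^'n \<Rightarrow> real"
  assumes n3: "CARD('n) \<ge> 3"
    and p: "p > 1"
    and Omega_compact: "compact \<Omega>"
    and Omega_smooth: "smooth_boundary \<Omega>"
    and Omega_ext: "exterior_ball_condition \<Omega>"
    and R: "R > 0" and zero_in: "0 \<in> \<Omega>" and Omega_sub: "\<Omega> \<subseteq> ball 0 R"
    and A_smooth: "\<exists>U. open U \<and> closure (- \<Omega>) \<subseteq> U \<and> (\<forall>i j. smooth_on U (\<lambda>x. A x $ i $ j))"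
    and A_sym: "\<forall>x\<in>- \<Omega>. \<forall>i j. A x $ i $ j = A x $ j $ i"
    and A_ell: "\<exists>C>0. \<forall>x\<in>- \<Omega>. \<forall>\<xi>::real^'n.
                  (1 / C) * (norm \<xi>)\<^sup>2 \<le> (\<Sum>i\<in>UNIV. \<Sum>j\<in>UNIV. A x $ i $ j * \<xi> $ i * \<xi> $ j)
                \<and> (\<Sum>i\<in>UNIV. \<Sum>j\<in>UNIV. A x $ i $ j * \<xi> $ i * \<xi> $ j) \<le> C * (norm \<xi>)\<^sup>2"
    and A_flat: "\<forall>x. norm x \<ge> R \<longrightarrow> A x = mat 1"
    and phi0_C2: "Ck_on 2 (- \<Omega>) \<phi>0" and phi0_cont: "continuous_on (closure (- \<Omega>)) \<phi>0"
    and phi0_eq: "\<forall>x\<in>- \<Omega>. div_op A \<phi>0 x = 0"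
    and phi0_bd: "\<forall>x\<in>frontier \<Omega>. \<phi>0 x = 0"
    and phi0_inf: "(\<phi>0 \<longlongrightarrow> 1) at_infinity"
    and phi0_pos: "\<forall>x\<in>- \<Omega>. 0 < \<phi>0 x \<and> \<phi>0 x < 1"
    and phi1_C2: "Ck_on 2 (- \<Omega>) \<phi>1" and phi1_cont: "continuous_on (closure (- \<Omega>)) \<phi>1"
    and phi1_eq: "\<forall>x\<in>- \<Omega>. div_op A \<phi>1 x = \<phi>1 x"
    and phi1_bd: "\<forall>x\<in>frontier \<Omega>. \<phi>1 x = 0"
    and phi1_inf: "((\<lambda>x. \<phi>1 x - sphere_integral (\<lambda>\<omega>. exp (x \<bullet> \<omega>))) \<longlongrightarrow> 0) at_infinity"
    and phi1_pos: "\<exists>C1>0. \<forall>x\<in>- \<Omega>. 0 < \<phi>1 x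
                     \<and> \<phi>1 x \<le> C1 * (1 + norm x) powr (- (real CARD('n) - 1) / 2) * exp (norm x)"
  shows "\<exists>C>0. \<forall>t\<ge>0.
     let \<psi>1 = (\<lambda>x. \<phi>1 x * exp (- t));
         S = {x. x \<notin> \<Omega> \<and> norm x \<le> t + R};
         f = (\<lambda>x. \<phi>0 x powr (- 1 / (p - 1)) * \<psi>1 x powr (p / (p - 1)))
     in f integrable_on S \<and>
        integral S f \<le> C * (t + R) powr (real CARD('n) - 1 - (real CARD('n) - 1) * (p / (p - 1)) / 2)"
proof -
  obtain U where "closure (- \<Omega>) \<subseteq> U" and A_U: "\<And>i j. smooth_on U (\<lambda>x. A x $ i $ j)"
    using A_smooth by blast
  have dA: "(\<lambda>y. A y $ i $ j) differentiable (at x)" if "x \<in> - \<Omega>" for x i j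
    using smooth_on_imp_differentiable[OF A_U] \<open>closure (- \<Omega>) \<subseteq> U\<close> closure_subset that by blast
  obtain K where "K > 0" and K: "\<forall>x\<in>- \<Omega>. norm x \<le> R \<longrightarrow> \<phi>1 x \<le> K * \<phi>0 x"
    using comparison_near_obstacle[OF Omega_compact Omega_sub dA _ uniformly_elliptic_imp_psd[OF A_ell]
        phi0_C2 phi0_cont _ _ _ phi1_C2 phi1_cont] A_sym phi0_eq phi0_bd phi0_pos phi1_eq phi1_bd phi1_pos
    by blast
  have cont0: "continuous_on (- \<Omega>) \<phi>0" and cont1: "continuous_on (- \<Omega>) \<phi>1"
    using phi0_C2 phi1_C2 by (simp_all add: numeral_2_eq_2)
  obtain c0 where "c0 > 0" and c0: "\<forall>x. R \<le> norm x \<longrightarrow> c0 \<le> \<phi>0 x"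
    using bounded_below_outside_ball[OF Omega_sub cont0 _ phi0_inf] phi0_pos by auto
  obtain C1 where "C1 > 0" and C1: "\<forall>x\<in>- \<Omega>. 0 < \<phi>1 x
                     \<and> \<phi>1 x \<le> C1 * (1 + norm x) powr (- (real CARD('n) - 1) / 2) * exp (norm x)"
    using phi1_pos by blast
  define f where "f t x = \<phi>0 x powr (- 1 / (p - 1)) * (\<phi>1 x * exp (- t)) powr (p / (p - 1))" for t x
  obtain C3 where "C3 \<ge> 0" and f_bound: "\<And>t x. x \<in> - \<Omega> \<Longrightarrow> f t x
      \<le> C3 * (1 + norm x) powr (- ((real CARD('n) - 1) * (p / (p - 1)) / 2)) * exp (p / (p - 1) * (norm x - (t + R)))"
    using integrand_decay[OF p \<open>K > 0\<close> \<open>c0 > 0\<close> \<open>C1 > 0\<close>, of "- \<Omega>" \<phi>0 \<phi>1 R] phi0_pos C1 c0 K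
    unfolding f_def by auto
  have f_cont: "continuous_on (- \<Omega>) (f t)" for t
  proof -
    have "\<phi>0 x \<noteq> 0" "\<phi>1 x * exp (- t) \<noteq> 0" if "x \<in> - \<Omega>" for x
      using phi0_pos C1 that by force+
    then show ?thesis unfolding f_def
      by (intro continuous_on_mult continuous_on_powr continuous_on_const continuous_on_exp cont0 cont1) auto
  qed
  have "(real CARD('n) - 1) * (p / (p - 1)) / 2 \<ge> 0" "p / (p - 1) > 0" "\<And>t x. 0 \<le> f t x"
    using n3 p by (simp_all add: f_def)
  from exterior_integral_bound[OF compact_imp_closed[OF Omega_compact] R this(1,2) \<open>C3 \<ge> 0\<close> f_cont this(3) f_bound]
  show ?thesis unfolding f_def Let_def .
qed

end
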